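(* For any combinatorial auction as described in the context, there exist finitely many valid cuts such that, after adding them as artificial items, there is a price vector $p$ (on original and artificial items) for which $(x^*,p)$ is a price-match equilibrium of the augmented auction; that is, PME prices can always be generated via cuts.
   Context: Combinatorial auction: item types $j\in\mathcal J$ with supply $c_j\in\mathbb Z_{\ge1}$ (vector $c$); bidders $\mathcal I$; finite set of bids $\mathcal K$, bid $k$ made by bidder $i(k)$ with bundle $a^k\in\mathbb Z^J_{\ge0}$, $a^k\le c$, and amount $b_k\ge0$; $\mathcal K_i$ = bids of bidder $i$; bids taken truthful. $\bm A$ = matrix with columns $a^k$, $\bm B$ with $\bm B_{i,k}=1$ iff $k\in\mathcal K_i$. Feasible allocation: $x\in\{0,1\}^K$, $\bm Ax\le c$, $\bm Bx\le\bm 1$. $x^*$ is an efficient (optimal total bid amount) feasible allocation; $a^{i*},b_{i*}$ are bundle and amount of $i$'s accepted bid ($\bm 0,0$ if none). A Walrasian equilibrium (WE) is $(x^*,p)$ with $p\ge0$, $s_i=b_{i*}-p\,a^{i*}\ge0$, $p\,a^k+s_{i(k)}\ge b_k$ for all bids $k$, and $p_j=0$ whenever item $j$ is in excess supply under $x^*$. A WE is a price-match equilibrium (PME) if for every bidder $i$ there is a feasible allocation $x^{-i}$ with $x^{-i}_k=0$ for $k\in\mathcal K_i$, $p\,a^k\le b_k$ whenever $x^{-i}_k=1$, and $p\bm Ax^{-i}=p\bm Ax^*$. A valid cut is $(\alpha,\alpha_0)$, $\alpha\in\mathbb R^K_{\ge0}$, with $\alpha x\le\alpha_0$ for every feasible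 allocation $x$ and $\alpha x^*=\alpha_0$. Adding it as an artificial item means appending $\alpha$ as a new row of $\bm A$ with supply $\alpha_0$ (feasible allocations are unchanged); WE and PME in the augmented auction are defined with these extra items treated like original ones. *)

theory Defs
  imports Complex_Main
begin

text \<open>A (generalised) auction: item set J (items of type 'j), bidder set I,
  bid set K, owner map own (bid k is made by bidder own k), bundle matrix
  A j k (amount of item j in bid k), supply c j, bid amounts b k.
  Entries are real so that artificial items (cuts) fit the same framework.
  An allocation x in {0,1}^K is represented by the set S of accepted bids.\<close>

definition usage :: "('j \<Rightarrow> 'k \<Rightarrow> real) \<Rightarrow> 'k set \<Rightarrow> 'j \<Rightarrow> real" where
  "usage A S j = (\<Sum>k\<in>S. A j k)"

definition feasible ::
  "'j set \<Rightarrow> 'k set \<Rightarrow> ('k \<Rightarrow> 'i) \<Rightarrow> ('j \<Rightarrow> 'k \<Rightarrow> real) \<Rightarrow> ('j \<Rightarrow> real) \<Rightarrow> 'k set \<Rightarrow> bool" where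
  "feasible J K own A c S \<longleftrightarrow>
     S \<subseteq> K \<and> (\<forall>j\<in>J. usage A S j \<le> c j) \<and>
     (\<forall>k1\<in>S. \<forall>k2\<in>S. own k1 = own k2 \<longrightarrow> k1 = k2)"

definition efficient ::
  "'j set \<Rightarrow> 'k set \<Rightarrow> ('k \<Rightarrow> 'i) \<Rightarrow> ('j \<Rightarrow> 'k \<Rightarrow> real) \<Rightarrow> ('j \<Rightarrow> real) \<Rightarrow> ('k \<Rightarrow> real)
     \<Rightarrow> 'k set \<Rightarrow> bool" where
  "efficient J K own A c b S \<longleftrightarrow> feasible J K own A c S \<and>
     (\<forall>T. feasible J K own A c T \<longrightarrow> (\<Sum>k\<in>T. b k) \<le> (\<Sum>k\<in>S. b k))"

definition bundle_price :: "'j set \<Rightarrow> ('j \<Rightarrow> 'k \<Rightarrow> real) \<Rightarrow> ('j \<Rightarrow> real) \<Rightarrow> 'k \<Rightarrow> real" where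
  "bundle_price J A p k = (\<Sum>j\<in>J. p j * A j k)"

text \<open>Surplus s_i = b_{i*} - p a^{i*} of bidder i under allocation S; since
  a feasible S contains at most one bid of i, the sum over the bids of i in S
  is exactly the accepted bid's surplus (and 0 if none is accepted).\<close>
definition surplus ::
  "'j set \<Rightarrow> ('k \<Rightarrow> 'i) \<Rightarrow> ('j \<Rightarrow> 'k \<Rightarrow> real) \<Rightarrow> ('k \<Rightarrow> real) \<Rightarrow> 'k set \<Rightarrow> ('j \<Rightarrow> real) \<Rightarrow> 'i \<Rightarrow> real" where
  "surplus J own A b S p i = (\<Sum>k\<in>{k\<in>S. own k = i}. b k - bundle_price J A p k)"

definition walrasian_eq ::
  "'j set \<Rightarrow> 'i set \<Rightarrow> 'k set \<Rightarrow> ('k \<Rightarrow> 'i) \<Rightarrow> ('j \<Rightarrow> 'k \<Rightarrow> real) \<Rightarrow> ('j \<Rightarrow> real) \<Rightarrow> ('k \<Rightarrow> real)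
     \<Rightarrow> 'k set \<Rightarrow> ('j \<Rightarrow> real) \<Rightarrow> bool" where
  "walrasian_eq J I K own A c b S p \<longleftrightarrow>
     (\<forall>j\<in>J. 0 \<le> p j) \<and>
     (\<forall>i\<in>I. 0 \<le> surplus J own A b S p i) \<and>
     (\<forall>k\<in>K. b k \<le> bundle_price J A p k + surplus J own A b S p (own k)) \<and>
     (\<forall>j\<in>J. usage A S j < c j \<longrightarrow> p j = 0)"

definition price_match_eq ::
  "'j set \<Rightarrow> 'i set \<Rightarrow> 'k set \<Rightarrow> ('k \<Rightarrow> 'i) \<Rightarrow> ('j \<Rightarrow> 'k \<Rightarrow> real) \<Rightarrow> ('j \<Rightarrow> real) \<Rightarrow> ('k \<Rightarrow> real)
     \<Rightarrow> 'k set \<Rightarrow> ('j \<Rightarrow> real) \<Rightarrow> bool" where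
  "price_match_eq J I K own A c b S p \<longleftrightarrow>
     walrasian_eq J I K own A c b S p \<and>
     (\<forall>i\<in>I. \<exists>T. feasible J K own A c T \<and> (\<forall>k\<in>T. own k \<noteq> i) \<and>
        (\<forall>k\<in>T. bundle_price J A p k \<le> b k) \<and>
        (\<Sum>j\<in>J. p j * usage A T j) = (\<Sum>j\<in>J. p j * usage A S j))"

definition valid_cut ::
  "'j set \<Rightarrow> 'k set \<Rightarrow> ('k \<Rightarrow> 'i) \<Rightarrow> ('j \<Rightarrow> 'k \<Rightarrow> real) \<Rightarrow> ('j \<Rightarrow> real) \<Rightarrow> 'k set
     \<Rightarrow> ('k \<Rightarrow> real) \<Rightarrow> real \<Rightarrow> bool" where
  "valid_cut J K own A c S \<alpha> \<alpha>0 \<longleftrightarrow>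
     (\<forall>k\<in>K. 0 \<le> \<alpha> k) \<and>
     (\<forall>T. feasible J K own A c T \<longrightarrow> (\<Sum>k\<in>T. \<alpha> k) \<le> \<alpha>0) \<and>
     (\<Sum>k\<in>S. \<alpha> k) = \<alpha>0"

definition aug_items :: "'j set \<Rightarrow> (('k \<Rightarrow> real) \<times> real) list \<Rightarrow> ('j + nat) set" where
  "aug_items J cuts = Inl ` J \<union> Inr ` {..<length cuts}"

definition aug_matrix ::
  "('j \<Rightarrow> 'k \<Rightarrow> real) \<Rightarrow> (('k \<Rightarrow> real) \<times> real) list \<Rightarrow> ('j + nat) \<Rightarrow> 'k \<Rightarrow> real" where
  "aug_matrix A cuts x k = (case x of Inl j \<Rightarrow> A j k | Inr l \<Rightarrow> fst (cuts ! l) k)"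

definition aug_supply ::
  "('j \<Rightarrow> real) \<Rightarrow> (('k \<Rightarrow> real) \<times> real) list \<Rightarrow> ('j + nat) \<Rightarrow> real" where
  "aug_supply c cuts x = (case x of Inl j \<Rightarrow> c j | Inr l \<Rightarrow> snd (cuts ! l))"

end

theory Submission
  imports Defs
begin

text \<open>Choose surpluses t of the winning bids in the core of the auction: the winners whose
  bidders are not served by a feasible allocation T get at most the efficiency loss
  b(S) - b(T), and t is maximal, so every t k is either the full bid b k or caught by a tight
  core constraint whose allocation T avoids the bidder of k. With s i the surplus of bidder i,
  the single cut with coefficients \<pi> k = max 0 (b k - s (own k)) is valid, and pricing it at
  1 and all items at 0 gives bundle prices \<pi> and surpluses s. This is a Walrasian
  equilibrium, and it is price-matching: for a winning bidder the tight allocation T, or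
  S without its bid when its surplus is the whole bid, has the same cut value as S.\<close>

definition packing ::
  "'k set \<Rightarrow> 't set \<Rightarrow> ('t \<Rightarrow> 'k set) \<Rightarrow> ('t \<Rightarrow> real) \<Rightarrow> ('k \<Rightarrow> real) \<Rightarrow> ('k \<Rightarrow> real) \<Rightarrow> bool" where
  "packing S F E r u t \<longleftrightarrow> (\<forall>k\<in>S. 0 \<le> t k \<and> t k \<le> u k) \<and> (\<forall>T\<in>F. sum t (E T) \<le> r T)"

definition blocked ::
  "'t set \<Rightarrow> ('t \<Rightarrow> 'k set) \<Rightarrow> ('t \<Rightarrow> real) \<Rightarrow> ('k \<Rightarrow> real) \<Rightarrow> ('k \<Rightarrow> real) \<Rightarrow> 'k \<Rightarrow> bool" where
  "blocked F E r u t k \<longleftrightarrow> t k = u k \<or> (\<exists>T\<in>F. k \<in> E T \<and> sum t (E T) = r T)"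

lemma packing_raise_coordinate:
  assumes "finite F" and "\<forall>T\<in>F. finite (E T)" and "packing S F E r u t" and "k \<in> S"
  obtains t' where "packing S F E r u t'" and "blocked F E r u t' k"
    and "\<And>x. t x \<le> t' x" and "\<And>x. x \<noteq> k \<Longrightarrow> t' x = t x"
proof -
  define D where "D = insert (u k - t k) ((\<lambda>T. r T - sum t (E T)) ` {T\<in>F. k \<in> E T})"
  have "finite D" "D \<noteq> {}" using assms(1) by (simp_all add: D_def)
  then obtain \<delta> where "\<delta> \<in> D" and \<delta>_le: "\<And>d. d \<in> D \<Longrightarrow> \<delta> \<le> d"
    using Min_in Min_le by blast
  have "0 \<le> \<delta>" using \<open>\<delta> \<in> D\<close> assms(3,4) by (auto simp: D_def packing_def)
  define t' where "t' x = t x + (if x = k then \<delta> else 0)" for x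
  have sum_t': "sum t' (E T) = sum t (E T) + (if k \<in> E T then \<delta> else 0)" if "T \<in> F" for T
    using assms(2) that by (simp add: t'_def sum.distrib)
  show thesis
  proof (rule that)
    have "t' k \<le> u k" using \<delta>_le[of "u k - t k"] by (simp add: D_def t'_def)
    moreover have "sum t' (E T) \<le> r T" if "T \<in> F" for T
      using that sum_t' \<delta>_le[of "r T - sum t (E T)"] assms(3) by (auto simp: D_def packing_def)
    ultimately show "packing S F E r u t'"
      using assms(3) \<open>0 \<le> \<delta>\<close> by (auto simp: packing_def t'_def)
    from \<open>\<delta> \<in> D\<close> consider "\<delta> = u k - t k"
      | T where "T \<in> F" "k \<in> E T" "\<delta> = r T - sum t (E T)"
      by (auto simp: D_def)
    then show "blocked F E r u t' k"
    proof cases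
      case 1
      then show ?thesis by (simp add: blocked_def t'_def)
    next
      case 2
      then show ?thesis using sum_t'[OF 2(1)] unfolding blocked_def by force
    qed
    show "t x \<le> t' x" for x using \<open>0 \<le> \<delta>\<close> by (simp add: t'_def)
    show "t' x = t x" if "x \<noteq> k" for x using that by (simp add: t'_def)
  qed
qed

lemma blocked_mono:
  assumes "blocked F E r u t k" and "packing S F E r u t'"
    and "\<And>x. t x \<le> t' x" and "t' k = t k"
  shows "blocked F E r u t' k"
  using assms(1) unfolding blocked_def
proof
  assume "\<exists>T\<in>F. k \<in> E T \<and> sum t (E T) = r T"
  then obtain T where "T \<in> F" "k \<in> E T" "sum t (E T) = r T" by blast
  moreover have "sum t' (E T) \<le> r T" using assms(2) \<open>T \<in> F\<close> by (simp add: packing_def)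
  moreover have "sum t (E T) \<le> sum t' (E T)" using assms(3) by (simp add: sum_mono)
  ultimately show "t' k = u k \<or> (\<exists>T\<in>F. k \<in> E T \<and> sum t' (E T) = r T)" by force
qed (use assms(4) in simp)

lemma exists_blocked_packing:
  assumes "finite S" and "finite F" and "\<forall>T\<in>F. finite (E T)"
    and "\<forall>T\<in>F. 0 \<le> r T" and "\<forall>k\<in>S. 0 \<le> u k"
  shows "\<exists>t. packing S F E r u t \<and> (\<forall>k\<in>S. blocked F E r u t k)"
proof -
  have "\<exists>t. packing S F E r u t \<and> (\<forall>k\<in>U. blocked F E r u t k)" if "finite U" "U \<subseteq> S" for U
    using that
  proof (induction U rule: finite_induct)
    case empty
    have "packing S F E r u (\<lambda>_. 0)" using assms(4,5) by (simp add: packing_def)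
    then show ?case by (intro exI[of _ "\<lambda>_. 0"]) simp
  next
    case (insert k U)
    then obtain t where t: "packing S F E r u t" and blocked: "\<forall>k'\<in>U. blocked F E r u t k'"
      by auto
    have "k \<in> S" using insert.prems by simp
    obtain t' where t': "packing S F E r u t'" "blocked F E r u t' k"
      and t'_ge: "\<And>x. t x \<le> t' x" and t'_eq: "\<And>x. x \<noteq> k \<Longrightarrow> t' x = t x"
      using packing_raise_coordinate[OF assms(2,3) t \<open>k \<in> S\<close>] by blast
    moreover have "blocked F E r u t' k'" if "k' \<in> U" for k'
      using that insert.hyps(2) by (intro blocked_mono[OF bspec[OF blocked that] t'(1) t'_ge t'_eq]) auto
    ultimately show ?case by (intro exI[of _ t']) blast
  qed
  then show ?thesis using assms(1) by blast
qed

lemma feasible_subset: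
  assumes "feasible J K own A c T" and "T' \<subseteq> T" and "finite K" and "\<forall>j k. 0 \<le> A j k"
  shows "feasible J K own A c T'"
proof -
  have "finite T" using assms(1,3) finite_subset unfolding feasible_def by blast
  then have "usage A T' j \<le> usage A T j" for j
    unfolding usage_def using assms(2,4) by (intro sum_mono2) auto
  then show ?thesis using assms(1,2) unfolding feasible_def by (meson order_trans subset_iff)
qed

lemma finite_feasible: "finite K \<Longrightarrow> finite {T. feasible J K own A c T}"
  by (rule finite_subset[of _ "Pow K"]) (auto simp: feasible_def)

lemma feasible_finite: "feasible J K own A c T \<Longrightarrow> finite K \<Longrightarrow> finite T"
  unfolding feasible_def using finite_subset by blast

lemma feasible_inj_on_own: "feasible J K own A c T \<Longrightarrow> inj_on own T"
  unfolding feasible_def inj_on_def by blast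

lemma price_usage_eq_sum_bundle_price:
  "(\<Sum>j\<in>J. p j * usage A T j) = (\<Sum>k\<in>T. bundle_price J A p k)"
  unfolding usage_def bundle_price_def by (simp add: sum_distrib_left sum.swap[of _ J])

definition winner_sum :: "('k \<Rightarrow> 'i) \<Rightarrow> 'k set \<Rightarrow> ('k \<Rightarrow> real) \<Rightarrow> 'i \<Rightarrow> real" where
  "winner_sum own S t i = (\<Sum>k\<in>{k\<in>S. own k = i}. t k)"

lemma surplus_eq_winner_sum:
  "surplus J own A b S p = winner_sum own S (\<lambda>k. b k - bundle_price J A p k)"
  unfolding surplus_def winner_sum_def ..

lemma winner_sum_own:
  assumes "inj_on own S" and "k \<in> S"
  shows "winner_sum own S t (own k) = t k"
proof -
  have "{k'\<in>S. own k' = own k} = {k}" using assms by (auto dest: inj_onD)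
  then show ?thesis unfolding winner_sum_def by simp
qed

lemma winner_sum_nonneg: "\<forall>k\<in>S. 0 \<le> t k \<Longrightarrow> 0 \<le> winner_sum own S t i"
  unfolding winner_sum_def by (intro sum_nonneg) blast

lemma sum_winner_sum_own:
  assumes "finite S" and "finite T" and "inj_on own T"
  shows "(\<Sum>k\<in>T. winner_sum own S t (own k)) = sum t S - sum t {k\<in>S. own k \<notin> own ` T}"
proof -
  have "(\<Sum>k\<in>T. winner_sum own S t (own k)) = (\<Sum>i\<in>own ` T. winner_sum own S t i)"
    using assms(3) by (simp add: sum.reindex)
  also have "\<dots> = (\<Sum>i\<in>own ` T. \<Sum>k\<in>{k\<in>{k\<in>S. own k \<in> own ` T}. own k = i}. t k)"
    unfolding winner_sum_def by (intro sum.cong) auto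
  also have "\<dots> = sum t {k\<in>S. own k \<in> own ` T}"
    using assms(1,2) by (intro sum.group) auto
  also have "\<dots> = sum t S - sum t {k\<in>S. own k \<notin> own ` T}"
    using sum.Int_Diff[OF assms(1), of t "{k. own k \<in> own ` T}"]
    by (simp add: Int_def set_diff_eq conj_commute)
  finally show ?thesis .
qed

lemma feasible_aug_iff:
  assumes "\<forall>(\<alpha>, \<alpha>0)\<in>set cuts. valid_cut J K own A c S \<alpha> \<alpha>0"
  shows "feasible (aug_items J cuts) K own (aug_matrix A cuts) (aug_supply c cuts) T
    \<longleftrightarrow> feasible J K own A c T"
proof
  assume T: "feasible (aug_items J cuts) K own (aug_matrix A cuts) (aug_supply c cuts) T"
  have "usage A T j \<le> c j" if "j \<in> J" for j
  proof -
    have "Inl j \<in> aug_items J cuts" using that by (simp add: aug_items_def)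
    with T have "usage (aug_matrix A cuts) T (Inl j) \<le> aug_supply c cuts (Inl j)"
      unfolding feasible_def by blast
    then show ?thesis by (simp add: usage_def aug_matrix_def aug_supply_def)
  qed
  then show "feasible J K own A c T" using T unfolding feasible_def by blast
next
  assume T: "feasible J K own A c T"
  have "usage (aug_matrix A cuts) T (Inr l) \<le> aug_supply c cuts (Inr l)"
    if "l < length cuts" for l
  proof -
    have "valid_cut J K own A c S (fst (cuts ! l)) (snd (cuts ! l))"
      using assms that nth_mem by fastforce
    then show ?thesis
      using T unfolding usage_def aug_matrix_def aug_supply_def valid_cut_def by simp
  qed
  then show "feasible (aug_items J cuts) K own (aug_matrix A cuts) (aug_supply c cuts) T"
    using T unfolding feasible_def aug_items_def
    by (auto simp: usage_def aug_matrix_def aug_supply_def)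
qed

definition cut_price :: "'j + nat \<Rightarrow> real" where
  "cut_price = case_sum (\<lambda>_. 0) (\<lambda>_. 1)"

lemma bundle_price_cut_price:
  assumes "finite J"
  shows "bundle_price (aug_items J cuts) (aug_matrix A cuts) cut_price k
    = (\<Sum>l<length cuts. fst (cuts ! l) k)"
proof -
  have "bundle_price (aug_items J cuts) (aug_matrix A cuts) cut_price k
      = (\<Sum>x\<in>Inr ` {..<length cuts}. cut_price x * aug_matrix A cuts x k)"
    unfolding bundle_price_def aug_items_def using assms
    by (intro sum.mono_neutral_right) (auto simp: cut_price_def)
  also have "\<dots> = (\<Sum>l<length cuts. fst (cuts ! l) k)"
    by (simp add: sum.reindex cut_price_def aug_matrix_def)
  finally show ?thesis .
qed

text \<open>\<pi> k is the price of the bundle of bid k when the cut (\<pi>, \<pi>(S)) is priced at 1 and every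
  item at 0.\<close>

definition price_matching_cut ::
  "'j set \<Rightarrow> 'i set \<Rightarrow> 'k set \<Rightarrow> ('k \<Rightarrow> 'i) \<Rightarrow> ('j \<Rightarrow> 'k \<Rightarrow> real) \<Rightarrow> ('j \<Rightarrow> real)
     \<Rightarrow> ('k \<Rightarrow> real) \<Rightarrow> 'k set \<Rightarrow> ('k \<Rightarrow> real) \<Rightarrow> bool" where
  "price_matching_cut J I K own A c b S \<pi> \<longleftrightarrow>
     valid_cut J K own A c S \<pi> (sum \<pi> S) \<and>
     (\<forall>i\<in>I. 0 \<le> winner_sum own S (\<lambda>k. b k - \<pi> k) i) \<and>
     (\<forall>k\<in>K. b k \<le> \<pi> k + winner_sum own S (\<lambda>k. b k - \<pi> k) (own k)) \<and>
     (\<forall>i\<in>I. \<exists>T. feasible J K own A c T \<and> (\<forall>k\<in>T. own k \<noteq> i) \<and>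
        (\<forall>k\<in>T. \<pi> k \<le> b k) \<and> sum \<pi> T = sum \<pi> S)"

lemma price_match_eq_cut_price:
  assumes "finite J" and "price_matching_cut J I K own A c b S \<pi>"
  shows "price_match_eq (aug_items J [(\<pi>, sum \<pi> S)]) I K own (aug_matrix A [(\<pi>, sum \<pi> S)])
    (aug_supply c [(\<pi>, sum \<pi> S)]) b S cut_price"
proof -
  let ?cuts = "[(\<pi>, sum \<pi> S)]"
  have price: "bundle_price (aug_items J ?cuts) (aug_matrix A ?cuts) cut_price k = \<pi> k" for k
    by (simp add: bundle_price_cut_price[OF assms(1)])
  have cut_value: "(\<Sum>x\<in>aug_items J ?cuts. cut_price x * usage (aug_matrix A ?cuts) T x) = sum \<pi> T"
    for T by (simp add: price_usage_eq_sum_bundle_price price)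
  have feasible: "feasible (aug_items J ?cuts) K own (aug_matrix A ?cuts) (aug_supply c ?cuts) T
      \<longleftrightarrow> feasible J K own A c T" for T
    using assms(2) by (intro feasible_aug_iff[where S = S]) (simp add: price_matching_cut_def)
  have cut_binding: "cut_price x = 0"
    if "x \<in> aug_items J ?cuts" and "usage (aug_matrix A ?cuts) S x < aug_supply c ?cuts x" for x
    using that by (auto simp: aug_items_def cut_price_def usage_def aug_matrix_def aug_supply_def)
  show ?thesis
    using assms(2) cut_binding
    unfolding price_match_eq_def walrasian_eq_def surplus_eq_winner_sum price cut_value feasible
    by (auto simp: price_matching_cut_def cut_price_def split: sum.split)
qed

text \<open>t k is the surplus of the winning bid k, so the revenue is b(S) - t(S): no feasible T
  lets the seller and the bidders served by T do better than under S.\<close>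

definition core_surplus ::
  "'j set \<Rightarrow> 'k set \<Rightarrow> ('k \<Rightarrow> 'i) \<Rightarrow> ('j \<Rightarrow> 'k \<Rightarrow> real) \<Rightarrow> ('j \<Rightarrow> real) \<Rightarrow> ('k \<Rightarrow> real)
     \<Rightarrow> 'k set \<Rightarrow> ('k \<Rightarrow> real) \<Rightarrow> bool" where
  "core_surplus J K own A c b S t \<longleftrightarrow>
     (\<forall>k\<in>S. 0 \<le> t k \<and> t k \<le> b k) \<and>
     (\<forall>T. feasible J K own A c T \<longrightarrow> sum t {k\<in>S. own k \<notin> own ` T} \<le> sum b S - sum b T)"

definition maximal_core_surplus ::
  "'j set \<Rightarrow> 'k set \<Rightarrow> ('k \<Rightarrow> 'i) \<Rightarrow> ('j \<Rightarrow> 'k \<Rightarrow> real) \<Rightarrow> ('j \<Rightarrow> real) \<Rightarrow> ('k \<Rightarrow> real)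
     \<Rightarrow> 'k set \<Rightarrow> ('k \<Rightarrow> real) \<Rightarrow> bool" where
  "maximal_core_surplus J K own A c b S t \<longleftrightarrow> core_surplus J K own A c b S t \<and>
     (\<forall>k\<in>S. t k = b k \<or> (\<exists>T. feasible J K own A c T \<and> own k \<notin> own ` T \<and>
       sum t {k'\<in>S. own k' \<notin> own ` T} = sum b S - sum b T))"

lemma exists_maximal_core_surplus:
  assumes "finite K" and "efficient J K own A c b S" and "\<forall>k\<in>K. 0 \<le> b k"
  shows "\<exists>t. maximal_core_surplus J K own A c b S t"
proof -
  have "feasible J K own A c S" using assms(2) by (simp add: efficient_def)
  then have "finite S" "S \<subseteq> K" using assms(1) by (auto simp: feasible_finite feasible_def)
  have "\<forall>T\<in>{T. feasible J K own A c T}. 0 \<le> sum b S - sum b T"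
    using assms(2) by (simp add: efficient_def)
  moreover have "\<forall>k\<in>S. 0 \<le> b k" using assms(3) \<open>S \<subseteq> K\<close> by blast
  ultimately show ?thesis
    using exists_blocked_packing[OF \<open>finite S\<close> finite_feasible[OF assms(1)],
        where E = "\<lambda>T. {k\<in>S. own k \<notin> own ` T}" and r = "\<lambda>T. sum b S - sum b T" and u = b]
      \<open>finite S\<close> by (simp add: maximal_core_surplus_def core_surplus_def packing_def blocked_def)
qed

definition bid_excess :: "('k \<Rightarrow> 'i) \<Rightarrow> 'k set \<Rightarrow> ('k \<Rightarrow> real) \<Rightarrow> ('k \<Rightarrow> real) \<Rightarrow> 'k \<Rightarrow> real" where
  "bid_excess own S b t k = max 0 (b k - winner_sum own S t (own k))"

lemma bid_excess_winner:
  "inj_on own S \<Longrightarrow> k \<in> S \<Longrightarrow> t k \<le> b k \<Longrightarrow> bid_excess own S b t k = b k - t k"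
  by (simp add: bid_excess_def winner_sum_own)

lemma core_surplus_slack:
  assumes "finite K" and "core_surplus J K own A c b S t"
    and "feasible J K own A c S" and "feasible J K own A c T"
  shows "(\<Sum>k\<in>T. b k - winner_sum own S t (own k))
    = sum (bid_excess own S b t) S - (sum b S - sum b T - sum t {k\<in>S. own k \<notin> own ` T})"
proof -
  have "sum (bid_excess own S b t) S = (\<Sum>k\<in>S. b k - t k)"
    using assms(2,3) by (intro sum.cong) (auto simp: bid_excess_winner feasible_inj_on_own core_surplus_def)
  moreover have "(\<Sum>k\<in>T. winner_sum own S t (own k)) = sum t S - sum t {k\<in>S. own k \<notin> own ` T}"
    using assms by (intro sum_winner_sum_own) (auto simp: feasible_finite feasible_inj_on_own)
  ultimately show ?thesis by (simp add: sum_subtractf)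
qed

lemma sum_bid_excess_le:
  assumes "finite K" and "\<forall>j k. 0 \<le> A j k" and "core_surplus J K own A c b S t"
    and "feasible J K own A c S" and "feasible J K own A c T"
  shows "sum (bid_excess own S b t) T \<le> sum (bid_excess own S b t) S"
proof -
  define T' where "T' = {k\<in>T. 0 \<le> b k - winner_sum own S t (own k)}"
  have "feasible J K own A c T'"
    using feasible_subset[OF assms(5) _ assms(1,2)] by (simp add: T'_def)
  have "sum (bid_excess own S b t) T = (\<Sum>k\<in>T'. b k - winner_sum own S t (own k))"
    using feasible_finite[OF assms(5,1)] by (simp add: T'_def bid_excess_def sum.inter_filter max_def)
  also have "\<dots> \<le> sum (bid_excess own S b t) S"
  proof -
    have "sum t {k\<in>S. own k \<notin> own ` T'} \<le> sum b S - sum b T'"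
      using assms(3) \<open>feasible J K own A c T'\<close> by (simp add: core_surplus_def)
    then show ?thesis
      using core_surplus_slack[OF assms(1,3,4) \<open>feasible J K own A c T'\<close>] by linarith
  qed
  finally show ?thesis .
qed

lemma sum_bid_excess_tight:
  assumes "finite K" and "\<forall>j k. 0 \<le> A j k" and "core_surplus J K own A c b S t"
    and "feasible J K own A c S" and "feasible J K own A c T"
    and "sum t {k\<in>S. own k \<notin> own ` T} = sum b S - sum b T"
  shows "sum (bid_excess own S b t) T = sum (bid_excess own S b t) S"
proof -
  have "sum (bid_excess own S b t) S = (\<Sum>k\<in>T. b k - winner_sum own S t (own k))"
    using core_surplus_slack[OF assms(1,3,4,5)] assms(6) by simp
  also have "\<dots> \<le> sum (bid_excess own S b t) T"
    by (intro sum_mono) (simp add: bid_excess_def)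
  finally show ?thesis using sum_bid_excess_le[OF assms(1-5)] by linarith
qed

lemma bid_excess_price_match:
  assumes "finite K" and "\<forall>j k. 0 \<le> A j k" and "feasible J K own A c S"
    and "maximal_core_surplus J K own A c b S t"
  shows "\<exists>T. feasible J K own A c T \<and> (\<forall>k\<in>T. own k \<noteq> i) \<and>
    sum (bid_excess own S b t) T = sum (bid_excess own S b t) S"
proof (cases "\<exists>k\<in>S. own k = i")
  case False
  then show ?thesis using assms(3) by blast
next
  case True
  then obtain k where "k \<in> S" "own k = i" by blast
  have core: "core_surplus J K own A c b S t" using assms(4) by (simp add: maximal_core_surplus_def)
  from assms(4) \<open>k \<in> S\<close> consider "t k = b k"
    | T where "feasible J K own A c T" "own k \<notin> own ` T"
      "sum t {k'\<in>S. own k' \<notin> own ` T} = sum b S - sum b T"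
    unfolding maximal_core_surplus_def by blast
  then show ?thesis
  proof cases
    case 1
    have "inj_on own S" using assms(3) by (rule feasible_inj_on_own)
    have "feasible J K own A c (S - {k})"
      using feasible_subset[OF assms(3) _ assms(1,2)] by blast
    moreover have "\<forall>k'\<in>S - {k}. own k' \<noteq> i"
      using \<open>inj_on own S\<close> \<open>k \<in> S\<close> \<open>own k = i\<close> by (auto dest: inj_onD)
    moreover have "bid_excess own S b t k = 0"
      using bid_excess_winner[OF \<open>inj_on own S\<close> \<open>k \<in> S\<close>] 1 by simp
    then have "sum (bid_excess own S b t) (S - {k}) = sum (bid_excess own S b t) S"
      using feasible_finite[OF assms(3,1)] \<open>k \<in> S\<close> by (simp add: sum_diff1)
    ultimately show ?thesis by blast
  next
    case 2
    have "\<forall>k'\<in>T. own k' \<noteq> i" using 2(2) \<open>own k = i\<close> by (metis image_eqI)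
    moreover have "sum (bid_excess own S b t) T = sum (bid_excess own S b t) S"
      using sum_bid_excess_tight[OF assms(1,2) core assms(3) 2(1,3)] .
    ultimately show ?thesis using 2(1) by blast
  qed
qed

lemma price_matching_cut_bid_excess:
  assumes "finite K" and "\<forall>j k. 0 \<le> A j k" and "\<forall>k\<in>K. 0 \<le> b k"
    and "feasible J K own A c S" and "maximal_core_surplus J K own A c b S t"
  shows "price_matching_cut J I K own A c b S (bid_excess own S b t)"
proof -
  let ?\<pi> = "bid_excess own S b t"
  have core: "core_surplus J K own A c b S t" using assms(5) by (simp add: maximal_core_surplus_def)
  then have t_bounds: "\<forall>k\<in>S. 0 \<le> t k" "\<forall>k\<in>S. t k \<le> b k"
    by (simp_all add: core_surplus_def)
  have "inj_on own S" using assms(4) by (rule feasible_inj_on_own)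
  then have winner_surplus: "winner_sum own S (\<lambda>k. b k - ?\<pi> k) = winner_sum own S t"
    unfolding winner_sum_def using t_bounds(2)
    by (intro ext sum.cong) (simp_all add: bid_excess_winner)
  have \<pi>_le_bid: "?\<pi> k \<le> b k" if "k \<in> K" for k
    using assms(3) that winner_sum_nonneg[OF t_bounds(1)] by (simp add: bid_excess_def)
  have price_match: "\<exists>T. feasible J K own A c T \<and> (\<forall>k\<in>T. own k \<noteq> i) \<and>
      (\<forall>k\<in>T. ?\<pi> k \<le> b k) \<and> sum ?\<pi> T = sum ?\<pi> S" for i
  proof -
    obtain T where T: "feasible J K own A c T" "\<forall>k\<in>T. own k \<noteq> i" "sum ?\<pi> T = sum ?\<pi> S"
      using bid_excess_price_match[OF assms(1,2,4,5)] by blast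
    moreover have "\<forall>k\<in>T. ?\<pi> k \<le> b k" using T(1) \<pi>_le_bid by (auto simp: feasible_def)
    ultimately show ?thesis by blast
  qed
  have valid: "valid_cut J K own A c S ?\<pi> (sum ?\<pi> S)"
    unfolding valid_cut_def using sum_bid_excess_le[OF assms(1,2) core assms(4)]
    by (simp add: bid_excess_def)
  have bid_le: "b k \<le> ?\<pi> k + winner_sum own S t (own k)" for k
    by (simp add: bid_excess_def)
  show ?thesis
    unfolding price_matching_cut_def winner_surplus
    by (intro conjI ballI valid bid_le winner_sum_nonneg[OF t_bounds(1)] price_match)
qed

theorem corollary2:
  fixes J :: "'j set" and I :: "'i set" and K :: "'k set"
    and own :: "'k \<Rightarrow> 'i" and a :: "'k \<Rightarrow> 'j \<Rightarrow> nat" and c :: "'j \<Rightarrow> nat"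
    and b :: "'k \<Rightarrow> real" and S :: "'k set"
  assumes "finite J" and "finite K"
    and "\<forall>k\<in>K. own k \<in> I"
    and "\<forall>j\<in>J. 1 \<le> c j"
    and "\<forall>k\<in>K. \<forall>j\<in>J. a k j \<le> c j"
    and "\<forall>k\<in>K. 0 \<le> b k"
    and "efficient J K own (\<lambda>j k. real (a k j)) (\<lambda>j. real (c j)) b S"
  shows "\<exists>cuts :: (('k \<Rightarrow> real) \<times> real) list.
           (\<forall>(\<alpha>, \<alpha>0)\<in>set cuts.
              valid_cut J K own (\<lambda>j k. real (a k j)) (\<lambda>j. real (c j)) S \<alpha> \<alpha>0) \<and>
           (\<exists>p. price_match_eq (aug_items J cuts) I K own
                   (aug_matrix (\<lambda>j k. real (a k j)) cuts)
                   (aug_supply (\<lambda>j. real (c j)) cuts) b S p)"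
proof -
  let ?A = "\<lambda>j k. real (a k j)" and ?c = "\<lambda>j. real (c j)"
  have "feasible J K own ?A ?c S" using assms(7) by (simp add: efficient_def)
  obtain t where t: "maximal_core_surplus J K own ?A ?c b S t"
    using exists_maximal_core_surplus[OF assms(2,7,6)] by blast
  define \<pi> where "\<pi> = bid_excess own S b t"
  have "price_matching_cut J I K own ?A ?c b S \<pi>"
    unfolding \<pi>_def using assms(2,6) \<open>feasible J K own ?A ?c S\<close> t
    by (intro price_matching_cut_bid_excess) auto
  then have "valid_cut J K own ?A ?c S \<pi> (sum \<pi> S)"
    and "price_match_eq (aug_items J [(\<pi>, sum \<pi> S)]) I K own (aug_matrix ?A [(\<pi>, sum \<pi> S)])
      (aug_supply ?c [(\<pi>, sum \<pi> S)]) b S cut_price"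
    by (simp_all add: price_matching_cut_def price_match_eq_cut_price[OF assms(1)])
  then show ?thesis by (intro exI[of _ "[(\<pi>, sum \<pi> S)]"]) auto
qed

end
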